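(* Consider a feedforward neural network viewed as a directed acyclic graph with random edge weights, satisfying hypotheses (H1)–(H5) below. For a path ${\bm p}$ starting at an input node, let $\tilde{\bm p}$ be the path without its input node, let $w_p$ denote the weight of the edge of ${\bm p}$ entering node $p$, and let $\omega_{\bm p}=\prod_{p\in\tilde{\bm p}}w_p$ be the path-product. Then for two distinct paths ${\bm p},{\bm p}'$ starting from a same input node, $$\mathbb E_W[\omega_{\bm p}\omega_{{\bm p}'}]=0\quad\text{and}\quad \mathbb E_W[\omega_{\bm p}^2]=\prod_{p\in\tilde{\bm p}}\mathbb E_W[w_p^2].$$ Furthermore, if there is at least one non-average-pooling weight on path ${\bm p}$, then $\mathbb E_W[\omega_{\bm p}]=0$.
   Context: $\mathbb E_W$ denotes expectation over the weights. Hypotheses: (H1) every non-input neuron is followed by a ReLU which kills half of its inputs, independently of the weights; (H2) the neurons are partitioned into layers, meaning groups that each path traverses at most once; (H3) all (non-average-pooling) weights have expectation $0$ and variance $2/(\text{in-degree})$; (H4) weights from different layers are independent; (H5) two distinct weights $w,w'$ from a same node satisfy $\mathbb E[ww']=0$. "Weights" may also include deterministic average-pooling weights, equal to $1/(\text{in-degree})$ of the average-pooling node. *)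

theory Defs
  imports "HOL-Probability.Probability"
begin

definition dag_path :: "('v \<times> 'v) set \<Rightarrow> 'v list \<Rightarrow> bool" where
  "dag_path E ps \<longleftrightarrow> ps \<noteq> [] \<and> successively (\<lambda>a b. (a, b) \<in> E) ps"

definition input_node :: "('v \<times> 'v) set \<Rightarrow> 'v \<Rightarrow> bool" where
  "input_node E v \<longleftrightarrow> (\<forall>u. (u, v) \<notin> E)"

definition output_node :: "('v \<times> 'v) set \<Rightarrow> 'v \<Rightarrow> bool" where
  "output_node E v \<longleftrightarrow> (\<forall>u. (v, u) \<notin> E)"

definition indeg :: "('v \<times> 'v) set \<Rightarrow> 'v \<Rightarrow> nat" where
  "indeg E v = card {u. (u, v) \<in> E}"

definition path_edges :: "'v list \<Rightarrow> ('v \<times> 'v) list" where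
  "path_edges ps = zip ps (tl ps)"

text \<open>Path product omega_p = product over the nodes p of the path (input node removed)
  of the weight w_p of the edge entering p.\<close>
definition path_prod :: "('v \<times> 'v \<Rightarrow> 'a \<Rightarrow> real) \<Rightarrow> 'v list \<Rightarrow> 'a \<Rightarrow> real" where
  "path_prod W ps x = prod_list (map (\<lambda>e. W e x) (path_edges ps))"

definition layer_edges :: "('v \<times> 'v) set \<Rightarrow> ('v \<Rightarrow> 'l) \<Rightarrow> 'l \<Rightarrow> ('v \<times> 'v) set" where
  "layer_edges E layer l = {e \<in> E. layer (fst e) = l}"

end

theory Submission
  imports Defs
begin

text \<open>Group the edges of the paths by the layer of their source node. By (H2) a path has at most
  one edge in each layer, so by (H4) the expectation of a product of path products factors over
  layers into expectations of products of at most two weights. Two distinct paths from the same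
  input node that both end at output nodes branch at some node; the two edges leaving it lie in
  the same layer, and by (H5) the corresponding factor vanishes. For a single path the factors
  are the second moments, resp. the means, of its weights, and the mean of a non-pooling weight
  is 0 by (H3).\<close>

lemma prod_list_map_eq_prod_filter:
  fixes f :: "'e \<Rightarrow> 'b::comm_monoid_mult"
  assumes "finite L" "\<forall>e\<in>set es. g e \<in> L"
  shows "prod_list (map f es) = (\<Prod>l\<in>L. prod_list (map f (filter (\<lambda>e. g e = l) es)))"
  using assms(2)
proof (induction es)
  case Nil then show ?case by simp
next
  case (Cons a es)
  have "(\<Prod>l\<in>L. prod_list (map f (filter (\<lambda>e. g e = l) (a # es))))
      = (\<Prod>l\<in>L. (if g a = l then f a else 1))
        * (\<Prod>l\<in>L. prod_list (map f (filter (\<lambda>e. g e = l) es)))"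
    by (subst prod.distrib[symmetric]) (intro prod.cong, auto)
  also have "(\<Prod>l\<in>L. (if g a = l then f a else 1)) = f a"
    using Cons.prems assms(1) by (simp add: prod.delta)
  finally show ?case using Cons by simp
qed

lemma length_filter_key_le_1:
  "distinct (map g xs) \<Longrightarrow> length (filter (\<lambda>x. g x = l) xs) \<le> 1"
proof (induction xs)
  case (Cons a xs)
  then show ?case
    by (auto simp: filter_empty_conv) (metis image_eqI)
qed simp

lemma filter_key_eq_singleton:
  assumes "distinct (map g xs)" "x \<in> set xs"
  shows "filter (\<lambda>y. g y = g x) xs = [x]"
proof -
  have "x \<in> set (filter (\<lambda>y. g y = g x) xs)" using assms(2) by simp
  moreover have "length (filter (\<lambda>y. g y = g x) xs) \<le> 1"
    using assms(1) by (rule length_filter_key_le_1)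
  ultimately show ?thesis by (cases "filter (\<lambda>y. g y = g x) xs") auto
qed

lemma prod_image_filter_key:
  assumes "distinct (map g xs)"
  shows "(\<Prod>l\<in>g ` set xs. h (filter (\<lambda>y. g y = l) xs)) = prod_list (map (\<lambda>x. h [x]) xs)"
proof -
  have "(\<Prod>l\<in>g ` set xs. h (filter (\<lambda>y. g y = l) xs))
      = (\<Prod>x\<in>set xs. h (filter (\<lambda>y. g y = g x) xs))"
    using assms by (simp add: prod.reindex distinct_map)
  also have "\<dots> = (\<Prod>x\<in>set xs. h [x])"
    using filter_key_eq_singleton[OF assms] by (intro prod.cong) auto
  also have "\<dots> = prod_list (map (\<lambda>x. h [x]) xs)"
    using assms by (simp add: prod.distinct_set_conv_list distinct_map)
  finally show ?thesis .
qed

lemma path_edges_subset: "dag_path E ps \<Longrightarrow> set (path_edges ps) \<subseteq> E"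
proof (induction ps rule: induct_list012)
  case (3 x y zs)
  then show ?case
    by (cases zs) (auto simp: dag_path_def path_edges_def)
qed (auto simp: dag_path_def path_edges_def)

lemma map_fst_path_edges: "map fst (path_edges ps) = butlast ps"
  by (simp add: path_edges_def map_fst_zip_take butlast_conv_take)

lemma distinct_map_fst_path_edges:
  assumes "distinct (map f ps)"
  shows "distinct (map (\<lambda>e. f (fst e)) (path_edges ps))"
proof -
  have "map (\<lambda>e. f (fst e)) (path_edges ps) = map f (map fst (path_edges ps))"
    by simp
  also have "\<dots> = butlast (map f ps)"
    by (simp only: map_fst_path_edges map_butlast)
  finally have "map (\<lambda>e. f (fst e)) (path_edges ps) = butlast (map f ps)" .
  then show ?thesis using assms by (simp add: distinct_butlast)
qed

text \<open>The output-node conditions exclude that one path is a proper prefix of the other.\<close>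

lemma dag_paths_branch:
  assumes "dag_path E xs" "dag_path E ys" "hd xs = hd ys" "xs \<noteq> ys"
    "output_node E (last xs)" "output_node E (last ys)"
  shows "\<exists>v u u'. (v, u) \<in> set (path_edges xs) \<and> (v, u') \<in> set (path_edges ys) \<and> u \<noteq> u'"
  using assms
proof (induction xs arbitrary: ys rule: induct_list012)
  case 1 then show ?case by (simp add: dag_path_def)
next
  case (2 a)
  then obtain y ys' where "ys = a # y # ys'"
    by (cases ys rule: remdups_adj.cases) (auto simp: dag_path_def)
  with 2 show ?case by (auto simp: dag_path_def output_node_def)
next
  case (3 a b xs)
  then obtain ys' where ys: "ys = a # ys'" by (cases ys) (auto simp: dag_path_def)
  show ?case
  proof (cases ys')
    case Nil
    with ys 3 show ?thesis by (auto simp: dag_path_def output_node_def)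
  next
    case (Cons c ys'')
    show ?thesis
    proof (cases "b = c")
      case False
      then show ?thesis using ys Cons by (auto simp: path_edges_def)
    next
      case True
      have "\<exists>v u u'. (v, u) \<in> set (path_edges (b # xs)) \<and> (v, u') \<in> set (path_edges (c # ys''))
          \<and> u \<noteq> u'"
        using 3 ys Cons True by (intro "3.IH"(2)) (auto simp: dag_path_def)
      then show ?thesis using ys Cons by (auto simp: path_edges_def)
    qed
  qed
qed

lemma integrable_mult_of_square_integrable:
  fixes f g :: "'a \<Rightarrow> real"
  assumes "f \<in> borel_measurable M" "g \<in> borel_measurable M"
    "integrable M (\<lambda>x. (f x)\<^sup>2)" "integrable M (\<lambda>x. (g x)\<^sup>2)"
  shows "integrable M (\<lambda>x. f x * g x)"
proof (rule Bochner_Integration.integrable_bound)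
  show "integrable M (\<lambda>x. (f x)\<^sup>2 + (g x)\<^sup>2)" using assms by auto
  show "AE x in M. norm (f x * g x) \<le> norm ((f x)\<^sup>2 + (g x)\<^sup>2)"
  proof (rule AE_I2)
    fix x
    have "2 * \<bar>f x\<bar> * \<bar>g x\<bar> \<le> (f x)\<^sup>2 + (g x)\<^sup>2"
      using sum_squares_bound[of "\<bar>f x\<bar>" "\<bar>g x\<bar>"] by simp
    then have "\<bar>f x\<bar> * \<bar>g x\<bar> \<le> (f x)\<^sup>2 + (g x)\<^sup>2"
      using zero_le_mult_iff[of "\<bar>f x\<bar>" "\<bar>g x\<bar>"] by linarith
    then show "norm (f x * g x) \<le> norm ((f x)\<^sup>2 + (g x)\<^sup>2)"
      by (simp add: abs_mult)
  qed
qed (use assms in auto)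

lemma measurable_prod_list_components:
  "set ds \<subseteq> A \<Longrightarrow> (\<lambda>z. prod_list (map z ds) :: real) \<in> borel_measurable (PiM A (\<lambda>_. borel))"
  by (induction ds) (auto intro!: borel_measurable_times measurable_component_singleton)

lemma (in prob_space) integral_prod_list_indep_groups:
  fixes W :: "'e \<Rightarrow> 'a \<Rightarrow> real" and S :: "'l \<Rightarrow> 'e set" and key :: "'e \<Rightarrow> 'l"
  assumes indep: "indep_vars (\<lambda>l. PiM (S l) (\<lambda>_. borel)) (\<lambda>l x. restrict (\<lambda>e. W e x) (S l)) UNIV"
    and key: "\<And>e. e \<in> set es \<Longrightarrow> e \<in> S (key e)"
    and int: "\<And>l. integrable M (\<lambda>x. prod_list (map (\<lambda>e. W e x) (filter (\<lambda>e. key e = l) es)))"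
  shows "(\<integral>x. prod_list (map (\<lambda>e. W e x) es) \<partial>M) =
    (\<Prod>l\<in>key ` set es. \<integral>x. prod_list (map (\<lambda>e. W e x) (filter (\<lambda>e. key e = l) es)) \<partial>M)"
proof -
  let ?group = "\<lambda>l z. prod_list (map z (filter (\<lambda>e. key e = l) es)) :: real"
  have group_restrict: "?group l (restrict (\<lambda>e. W e x) (S l)) = ?group l (\<lambda>e. W e x)" for l x
    using key by (intro arg_cong[where f = prod_list] map_cong) auto
  have "indep_vars (\<lambda>_. borel) (\<lambda>l x. ?group l (restrict (\<lambda>e. W e x) (S l))) UNIV"
    using key by (intro indep_vars_compose2[OF indep] measurable_prod_list_components) auto
  then have indep_groups: "indep_vars (\<lambda>_. borel) (\<lambda>l x. ?group l (\<lambda>e. W e x)) (key ` set es)"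
    unfolding group_restrict by (rule indep_vars_subset) simp
  have "(\<integral>x. prod_list (map (\<lambda>e. W e x) es) \<partial>M)
      = (\<integral>x. (\<Prod>l\<in>key ` set es. ?group l (\<lambda>e. W e x)) \<partial>M)"
    by (subst prod_list_map_eq_prod_filter[where L = "key ` set es" and g = key]) auto
  also have "\<dots> = (\<Prod>l\<in>key ` set es. \<integral>x. ?group l (\<lambda>e. W e x) \<partial>M)"
    by (rule indep_vars_lebesgue_integral[OF _ indep_groups int]) simp
  finally show ?thesis .
qed

locale random_network = prob_space M
  for M :: "'a measure" and E :: "('v \<times> 'v) set" and layer :: "'v \<Rightarrow> 'l"
    and Pool :: "'v set" and W :: "'v \<times> 'v \<Rightarrow> 'a \<Rightarrow> real" +
  assumes layers_distinct: "\<And>ps. dag_path E ps \<Longrightarrow> distinct (map layer ps)"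
    and pool: "\<And>u v x. (u, v) \<in> E \<Longrightarrow> v \<in> Pool \<Longrightarrow> x \<in> space M \<Longrightarrow>
      W (u, v) x = 1 / real (indeg E v)"
    and weight_measurable_nonpool: "\<And>u v. (u, v) \<in> E \<Longrightarrow> v \<notin> Pool \<Longrightarrow> W (u, v) \<in> borel_measurable M"
    and weight_square_integrable_nonpool:
      "\<And>u v. (u, v) \<in> E \<Longrightarrow> v \<notin> Pool \<Longrightarrow> integrable M (\<lambda>x. (W (u, v) x)\<^sup>2)"
    and weight_mean_nonpool: "\<And>u v. (u, v) \<in> E \<Longrightarrow> v \<notin> Pool \<Longrightarrow> (\<integral>x. W (u, v) x \<partial>M) = 0"
    and layers_indep: "indep_vars (\<lambda>l. PiM (layer_edges E layer l) (\<lambda>_. borel))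
      (\<lambda>l x. restrict (\<lambda>e. W e x) (layer_edges E layer l)) UNIV"
    and siblings_uncorrelated: "\<And>v u u'. (v, u) \<in> E \<Longrightarrow> (v, u') \<in> E \<Longrightarrow> u \<noteq> u' \<Longrightarrow>
      (\<integral>x. W (v, u) x * W (v, u') x \<partial>M) = 0"
begin

lemma weight_measurable: "e \<in> E \<Longrightarrow> W e \<in> borel_measurable M"
proof (cases e)
  case (Pair u v)
  assume "e \<in> E"
  show ?thesis
  proof (cases "v \<in> Pool")
    case True
    then have "W e \<in> borel_measurable M \<longleftrightarrow> (\<lambda>_. 1 / real (indeg E v)) \<in> borel_measurable M"
      using \<open>e \<in> E\<close> Pair pool by (intro measurable_cong) auto
    then show ?thesis by simp
  qed (use \<open>e \<in> E\<close> Pair weight_measurable_nonpool in auto)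
qed

lemma weight_square_integrable: "e \<in> E \<Longrightarrow> integrable M (\<lambda>x. (W e x)\<^sup>2)"
proof (cases e)
  case (Pair u v)
  assume "e \<in> E"
  show ?thesis
  proof (cases "v \<in> Pool")
    case True
    then have "integrable M (\<lambda>x. (W e x)\<^sup>2) \<longleftrightarrow> integrable M (\<lambda>_. (1 / real (indeg E v))\<^sup>2)"
      using \<open>e \<in> E\<close> Pair pool by (intro Bochner_Integration.integrable_cong) auto
    then show ?thesis by simp
  qed (use \<open>e \<in> E\<close> Pair weight_square_integrable_nonpool in auto)
qed

lemma integrable_prod_list_weights:
  assumes "set ds \<subseteq> E" "length ds \<le> 2"
  shows "integrable M (\<lambda>x. prod_list (map (\<lambda>e. W e x) ds))"
proof -
  consider "ds = []" | a where "ds = [a]" | a b where "ds = [a, b]"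
    using assms(2) by (cases ds rule: remdups_adj.cases) auto
  then show ?thesis
  proof cases
    case (2 a)
    then have "a \<in> E" using assms(1) by simp
    then have "integrable M (W a)"
      by (intro square_integrable_imp_integrable[OF weight_measurable weight_square_integrable])
    then show ?thesis using 2 by simp
  next
    case (3 a b)
    then have "a \<in> E" "b \<in> E" using assms(1) by auto
    then have "integrable M (\<lambda>x. W a x * W b x)"
      by (intro integrable_mult_of_square_integrable[OF weight_measurable weight_measurable
            weight_square_integrable weight_square_integrable])
    then show ?thesis using 3 by simp
  qed simp
qed

lemma length_filter_layer_path_edges:
  "dag_path E ps \<Longrightarrow> length (filter (\<lambda>e. layer (fst e) = l) (path_edges ps)) \<le> 1"
  by (intro length_filter_key_le_1 distinct_map_fst_path_edges layers_distinct)

lemma length_filter_layer_path_edges_append: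
  assumes "dag_path E ps" "dag_path E ps'"
  shows "length (filter (\<lambda>e. layer (fst e) = l) (path_edges ps @ path_edges ps')) \<le> 2"
  using length_filter_layer_path_edges[OF assms(1), of l] length_filter_layer_path_edges[OF assms(2), of l]
  by simp

lemma integral_prod_list_weights_by_layer:
  assumes "set es \<subseteq> E" "\<And>l. length (filter (\<lambda>e. layer (fst e) = l) es) \<le> 2"
  shows "(\<integral>x. prod_list (map (\<lambda>e. W e x) es) \<partial>M) =
    (\<Prod>l\<in>(\<lambda>e. layer (fst e)) ` set es.
      \<integral>x. prod_list (map (\<lambda>e. W e x) (filter (\<lambda>e. layer (fst e) = l) es)) \<partial>M)"
  using assms
  by (intro integral_prod_list_indep_groups[OF layers_indep] integrable_prod_list_weights)
    (auto simp: layer_edges_def)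

lemma integral_path_prod_mult_eq_0:
  assumes paths: "dag_path E ps" "dag_path E ps'" "hd ps = hd ps'" "ps \<noteq> ps'"
    and outputs: "output_node E (last ps)" "output_node E (last ps')"
  shows "(\<integral>x. path_prod W ps x * path_prod W ps' x \<partial>M) = 0"
proof -
  let ?es = "path_edges ps @ path_edges ps'" and ?key = "\<lambda>e. layer (fst e)"
  obtain v u u' where branch:
    "(v, u) \<in> set (path_edges ps)" "(v, u') \<in> set (path_edges ps')" "u \<noteq> u'"
    using dag_paths_branch[OF paths outputs] by blast
  have es: "set ?es \<subseteq> E" using path_edges_subset paths(1,2) by auto
  have "filter (\<lambda>e. ?key e = layer v) ?es = [(v, u), (v, u')]"
    using filter_key_eq_singleton[OF distinct_map_fst_path_edges[OF layers_distinct]] paths(1,2) branch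
    by fastforce
  moreover have "(v, u) \<in> E" "(v, u') \<in> E" using branch es by auto
  ultimately have branch_factor:
    "(\<integral>x. prod_list (map (\<lambda>e. W e x) (filter (\<lambda>e. ?key e = layer v) ?es)) \<partial>M) = 0"
    using siblings_uncorrelated branch(3) by simp
  have "(\<integral>x. path_prod W ps x * path_prod W ps' x \<partial>M)
      = (\<integral>x. prod_list (map (\<lambda>e. W e x) ?es) \<partial>M)"
    by (simp add: path_prod_def)
  also have "\<dots> = (\<Prod>l\<in>?key ` set ?es.
      \<integral>x. prod_list (map (\<lambda>e. W e x) (filter (\<lambda>e. ?key e = l) ?es)) \<partial>M)"
    using es length_filter_layer_path_edges_append[OF paths(1,2)]
    by (rule integral_prod_list_weights_by_layer)
  also have "\<dots> = 0"
    using branch_factor branch by (intro prod_zero) force+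
  finally show ?thesis .
qed

lemma integral_path_prod_square:
  assumes "dag_path E ps"
  shows "(\<integral>x. (path_prod W ps x)\<^sup>2 \<partial>M) = prod_list (map (\<lambda>e. \<integral>x. (W e x)\<^sup>2 \<partial>M) (path_edges ps))"
proof -
  let ?key = "\<lambda>e. layer (fst e)"
  let ?group = "\<lambda>ds. \<integral>x. prod_list (map (\<lambda>e. W e x) (ds @ ds)) \<partial>M"
  have "(\<integral>x. (path_prod W ps x)\<^sup>2 \<partial>M) =
      (\<integral>x. prod_list (map (\<lambda>e. W e x) (path_edges ps @ path_edges ps)) \<partial>M)"
    by (simp add: path_prod_def power2_eq_square)
  also have "\<dots> = (\<Prod>l\<in>?key ` set (path_edges ps). ?group (filter (\<lambda>e. ?key e = l) (path_edges ps)))"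
    using path_edges_subset[OF assms] length_filter_layer_path_edges_append[OF assms assms]
    by (subst integral_prod_list_weights_by_layer) auto
  also have "\<dots> = prod_list (map (\<lambda>e. ?group [e]) (path_edges ps))"
    by (intro prod_image_filter_key distinct_map_fst_path_edges layers_distinct assms)
  finally show ?thesis by (simp add: power2_eq_square)
qed

lemma integral_path_prod_eq_0:
  assumes "dag_path E ps" and nonpool: "e \<in> set (path_edges ps)" "snd e \<notin> Pool"
  shows "(\<integral>x. path_prod W ps x \<partial>M) = 0"
proof -
  let ?key = "\<lambda>e. layer (fst e)"
  let ?group = "\<lambda>ds. \<integral>x. prod_list (map (\<lambda>e. W e x) ds) \<partial>M"
  have "(\<integral>x. path_prod W ps x \<partial>M) =
      (\<Prod>l\<in>?key ` set (path_edges ps). ?group (filter (\<lambda>e. ?key e = l) (path_edges ps)))"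
    unfolding path_prod_def
    by (intro integral_prod_list_weights_by_layer path_edges_subset assms(1)
        le_trans[OF length_filter_layer_path_edges[OF assms(1)]]) simp
  also have "\<dots> = prod_list (map (\<lambda>e. ?group [e]) (path_edges ps))"
    by (intro prod_image_filter_key distinct_map_fst_path_edges layers_distinct assms)
  also have "\<dots> = 0"
  proof -
    have "e \<in> E" using nonpool path_edges_subset[OF assms(1)] by auto
    then have "?group [e] = 0" using weight_mean_nonpool nonpool(2) by (cases e) simp
    then show ?thesis using nonpool(1) by (force simp: prod_list_zero_iff)
  qed
  finally show ?thesis .
qed

end

theorem lemma4:
  fixes M :: "'a measure"
    and E :: "('v::finite \<times> 'v) set"
    and layer :: "'v \<Rightarrow> 'l"
    and Pool :: "'v set"
    and W :: "'v \<times> 'v \<Rightarrow> 'a \<Rightarrow> real"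
  assumes prob: "prob_space M"
    \<comment> \<open>(H2) every path traverses each layer at most once\<close>
    and H2: "\<And>ps. dag_path E ps \<Longrightarrow> distinct (map layer ps)"
    \<comment> \<open>average-pooling weights are deterministic, equal to 1/(in-degree)\<close>
    and pool: "\<And>u v x. (u, v) \<in> E \<Longrightarrow> v \<in> Pool \<Longrightarrow> x \<in> space M \<Longrightarrow>
                 W (u, v) x = 1 / real (indeg E v)"
    \<comment> \<open>(H3) non-average-pooling weights: mean 0, variance 2/(in-degree)\<close>
    and H3_meas: "\<And>u v. (u, v) \<in> E \<Longrightarrow> v \<notin> Pool \<Longrightarrow> W (u, v) \<in> borel_measurable M"
    and H3_int: "\<And>u v. (u, v) \<in> E \<Longrightarrow> v \<notin> Pool \<Longrightarrow> integrable M (\<lambda>x. (W (u, v) x)\<^sup>2)"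
    and H3_mean: "\<And>u v. (u, v) \<in> E \<Longrightarrow> v \<notin> Pool \<Longrightarrow> (\<integral>x. W (u, v) x \<partial>M) = 0"
    and H3_var: "\<And>u v. (u, v) \<in> E \<Longrightarrow> v \<notin> Pool \<Longrightarrow>
                   (\<integral>x. (W (u, v) x - (\<integral>y. W (u, v) y \<partial>M))\<^sup>2 \<partial>M) = 2 / real (indeg E v)"
    \<comment> \<open>(H4) weights from different layers are independent\<close>
    and H4: "prob_space.indep_vars M
               (\<lambda>l. PiM (layer_edges E layer l) (\<lambda>_. borel))
               (\<lambda>l x. restrict (\<lambda>e. W e x) (layer_edges E layer l)) UNIV"
    \<comment> \<open>(H5) two distinct weights from a same node are uncorrelated\<close>
    and H5: "\<And>v u u'. (v, u) \<in> E \<Longrightarrow> (v, u') \<in> E \<Longrightarrow> u \<noteq> u' \<Longrightarrow>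
               (\<integral>x. W (v, u) x * W (v, u') x \<partial>M) = 0"
  shows
    "(\<forall>ps ps'. dag_path E ps \<and> dag_path E ps' \<and> hd ps = hd ps' \<and> input_node E (hd ps)
        \<and> output_node E (last ps) \<and> output_node E (last ps') \<and> ps \<noteq> ps'
        \<longrightarrow> (\<integral>x. path_prod W ps x * path_prod W ps' x \<partial>M) = 0)
     \<and> (\<forall>ps. dag_path E ps \<and> input_node E (hd ps) \<longrightarrow>
        (\<integral>x. (path_prod W ps x)\<^sup>2 \<partial>M) =
          prod_list (map (\<lambda>e. \<integral>x. (W e x)\<^sup>2 \<partial>M) (path_edges ps)))
     \<and> (\<forall>ps. dag_path E ps \<and> input_node E (hd ps)
        \<and> (\<exists>e \<in> set (path_edges ps). snd e \<notin> Pool)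
        \<longrightarrow> (\<integral>x. path_prod W ps x \<partial>M) = 0)"
proof -
  interpret random_network M E layer Pool W
    by (intro random_network.intro random_network_axioms.intro prob)
      (fact H2 pool H3_meas H3_int H3_mean H4 H5)+
  show ?thesis
    using integral_path_prod_mult_eq_0 integral_path_prod_square integral_path_prod_eq_0 by blast
qed

end
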